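(* Let $q$ be a nonzero complex number and let ${\mathbb A}={\mathbb F}({\rm SP}_q^{2|1})$ be the super-Hopf algebra generated by even $x, y, x^{-1}$ and odd $\theta$ with relations $x\theta=q\theta x$, $\theta y=qy\theta$, $yx=q^{-2}xy$, $\theta^2=q^{1/2}(q-1)yx$, $xx^{-1}={\bf 1}=x^{-1}x$, and Hopf structure $\Delta(x)=x\otimes x$, $\Delta(\theta)=\theta\otimes{\bf 1}+{\bf 1}\otimes\theta$, $\Delta(y)=x^{-1}\otimes y+y\otimes x^{-1}$, $\epsilon(x)=1$, $\epsilon(\theta)=\epsilon(y)=0$, $S(x)=x^{-1}$, $S(\theta)=-\theta$, $S(y)=-xyx$. Let ${\mathbb U}$ be the dual super-Hopf algebra generated by $K$, $\nabla$, $N$, where the dual pairing $\langle\,,\rangle:{\mathbb U}\times{\mathbb A}\to\mathbb C$ is determined on monomials $f=x^k\theta^l y^n$ by $$\langle K,f\rangle = k\,\delta_{l,0}\delta_{n,0},\quad \langle\nabla,f\rangle=\delta_{l,1},\quad \langle N,f\rangle=\delta_{n,1},\quad \langle 1_{\mathbb U},f\rangle=\epsilon_{\mathbb A}(f)=\delta_{k,0}.$$ Then the generators of ${\mathbb U}$ satisfy $$K\nabla=\nabla K,\quad KN=NK,\quad \nabla N=N\nabla,\quad \nabla^2=0 .$$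
   Context: A dual pairing of super bialgebras ${\mathbb U}$ and ${\mathbb A}$ is a bilinear map $\langle\,,\rangle:{\mathbb U}\times{\mathbb A}\to\mathbb C$ with $\langle u,ab\rangle=\langle\Delta_{\mathbb U}(u),a\otimes b\rangle$, $\langle uv,a\rangle=\langle u\otimes v,\Delta_{\mathbb A}(a)\rangle$, $\langle u,1_{\mathbb A}\rangle=\epsilon_{\mathbb U}(u)$, $\langle 1_{\mathbb U},a\rangle=\epsilon_{\mathbb A}(a)$, extended to tensor products by $\langle u\otimes v,a\otimes b\rangle=(-1)^{\tau(v)\tau(a)}\langle u,a\rangle\langle v,b\rangle$, where $\tau$ denotes the $\mathbb Z_2$-grade ($\theta$ and $\nabla$ odd, the other generators even). The product in ${\mathbb U}$ is thus determined by the coproduct of ${\mathbb A}$ via the pairing. Tensor products of superalgebras use the graded product $(a_1\otimes a_2)(a_3\otimes a_4)=(-1)^{\tau(a_2)\tau(a_3)}a_1a_3\otimes a_2a_4$. *)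

theory Defs
  imports Complex_Main
begin

text \<open>A basis of A is given by the normal-ordered monomials  x^k theta^l y^n
  with k :: int, l \<in> {0,1}, n :: nat; a monomial is encoded as the triple (k,l,n).\<close>

type_synonym mono = "int \<times> nat \<times> nat"

definition mono_one :: mono where "mono_one = (0, 0, 0)"

definition grade :: "mono \<Rightarrow> nat" where
  "grade m = (case m of (k, l, n) \<Rightarrow> l mod 2)"

text \<open>Product of two normal-ordered monomials in A, rewritten in normal order using
  x theta = q theta x, theta y = q y theta, y x = q^-2 x y, theta^2 = q^(1/2)(q-1) y x
  (q^(1/2) := csqrt q).\<close>
definition mono_mult :: "complex \<Rightarrow> mono \<Rightarrow> mono \<Rightarrow> complex \<times> mono" where
  "mono_mult q m1 m2 = (case m1 of (a, b, c) \<Rightarrow> case m2 of (d, e, f) \<Rightarrow>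
     (let co = q powi (- (2 * int c * d + int b * d + int c * int e)) in
      if b = 1 \<and> e = 1
      then (co * csqrt q * (q - 1) * q powi (-2), (a + d + 1, 0, c + f + 1))
      else (co, (a + d, b + e, c + f))))"

text \<open>Elements of A \<otimes> A as formal (unnormalised) sums of terms c * (m1 \<otimes> m2).\<close>
type_synonym tens = "(complex \<times> mono \<times> mono) list"

definition tens_mult :: "complex \<Rightarrow> tens \<Rightarrow> tens \<Rightarrow> tens" where
  "tens_mult q L1 L2 = concat (map (\<lambda>(c, a1, a2). map (\<lambda>(d, a3, a4).
       (let (c1, m1) = mono_mult q a1 a3; (c2, m2) = mono_mult q a2 a4
        in ((-1) ^ (grade a2 * grade a3) * c * d * c1 * c2, m1, m2))) L2) L1)"

definition Delta_theta :: tens where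
  "Delta_theta = [(1, (0, 1, 0), mono_one), (1, mono_one, (0, 1, 0))]"

definition Delta_y :: tens where
  "Delta_y = [(1, (-1, 0, 0), (0, 0, 1)), (1, (0, 0, 1), (-1, 0, 0))]"

fun Delta_y_pow :: "complex \<Rightarrow> nat \<Rightarrow> tens" where
  "Delta_y_pow q 0 = [(1, mono_one, mono_one)]"
| "Delta_y_pow q (Suc n) = tens_mult q (Delta_y_pow q n) Delta_y"

definition Delta :: "complex \<Rightarrow> mono \<Rightarrow> tens" where
  "Delta q m = (case m of (k, l, n) \<Rightarrow>
     tens_mult q (tens_mult q [(1, (k, 0, 0), (k, 0, 0))]
                    (if l = 1 then Delta_theta else [(1, mono_one, mono_one)]))
       (Delta_y_pow q n))"

text \<open>Homogeneous elements of U: (grade, values of the pairing on basis monomials).\<close>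
type_synonym ufun = "nat \<times> (mono \<Rightarrow> complex)"

text \<open>Product in U determined by the pairing:
  <uv, f> = <u \<otimes> v, Delta f> with <u\<otimes>v, a\<otimes>b> = (-1)^(tau v * tau a) <u,a><v,b>.\<close>
definition U_mult :: "complex \<Rightarrow> ufun \<Rightarrow> ufun \<Rightarrow> ufun" where
  "U_mult q u v = ((fst u + fst v) mod 2, (\<lambda>f.
     sum_list (map (\<lambda>(c, f1, f2). c * (-1) ^ (fst v * grade f1) * snd u f1 * snd v f2)
                   (Delta q f))))"

definition U_K :: ufun where
  "U_K = (0, \<lambda>(k, l, n). if l = 0 \<and> n = 0 then of_int k else 0)"

definition U_nabla :: ufun where
  "U_nabla = (1, \<lambda>(k, l, n). if l = 1 then 1 else 0)"

definition U_N :: ufun where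
  "U_N = (0, \<lambda>(k, l, n). if n = 1 then 1 else 0)"

definition U_eq :: "complex \<Rightarrow> ufun \<Rightarrow> ufun \<Rightarrow> bool" where
  "U_eq q u v \<longleftrightarrow> (\<forall>k l n. l \<le> 1 \<longrightarrow> snd u (k, l, n) = snd v (k, l, n))"

definition U_zero :: ufun where "U_zero = (0, \<lambda>_. 0)"

end

theory Submission imports Defs begin

text \<open>The coproduct of \<open>A\<close> is graded cocommutative on every basis monomial: \<open>\<Delta>(y)^n\<close> is a
  sum of terms \<open>a x^-j y^i \<otimes> x^-i y^j\<close> whose coefficient multiset is symmetric in \<open>(i, j)\<close>,
  and multiplying by \<open>x^k \<otimes> x^k\<close> and \<open>\<Delta>(\<theta>) = \<theta> \<otimes> 1 + 1 \<otimes> \<theta>\<close> keeps this symmetry.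
  Dually \<open>U\<close> is supercommutative, \<open>uv = (-1)^(|u||v|) vu\<close>, as soon as one factor pairs only
  with monomials of its own parity, which is the case for \<open>K\<close> and \<open>\<nabla>\<close>. For \<open>\<nabla>\<^sup>2\<close> this
  reads \<open>\<nabla>\<^sup>2 = -\<nabla>\<^sup>2\<close>. Nothing here depends on \<open>q\<close>.\<close>

lemma sum_list_concat:
  "sum_list (concat xss) = sum_list (map sum_list (xss :: 'a::monoid_add list list))"
  by (induction xss) auto

text \<open>\<open>(a, i, j)\<close> encodes the term \<open>a x^-j y^i \<otimes> x^-i y^j\<close> of \<open>\<Delta>(y)^n\<close>.\<close>

fun ypow_terms :: "complex \<Rightarrow> nat \<Rightarrow> (complex \<times> nat \<times> nat) list" where
  "ypow_terms q 0 = [(1, 0, 0)]"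
| "ypow_terms q (Suc n) = concat (map (\<lambda>(a, i, j).
      [(a * q powi (2 * int i), i, Suc j), (a * q powi (2 * int j), Suc i, j)]) (ypow_terms q n))"

lemma Delta_y_pow_eq:
  "Delta_y_pow q n = map (\<lambda>(a, i, j). (a, (- int j, 0, i), (- int i, 0, j))) (ypow_terms q n)"
proof (induction n)
  case 0
  then show ?case by (simp add: mono_one_def)
next
  case (Suc n)
  show ?case
    unfolding Delta_y_pow.simps ypow_terms.simps Suc tens_mult_def map_concat map_map
    by (rule arg_cong[where f = concat], rule map_cong)
       (auto simp: Delta_y_def mono_mult_def grade_def algebra_simps)
qed

lemma sum_list_ypow_terms_swap:
  "sum_list (map (h :: _ \<Rightarrow> 'a::comm_monoid_add) (ypow_terms q n))
     = sum_list (map (\<lambda>(a, i, j). h (a, j, i)) (ypow_terms q n))"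
proof (induction n arbitrary: h)
  case 0
  then show ?case by simp
next
  case (Suc n)
  have sum_Suc: "sum_list (map h' (ypow_terms q (Suc n))) = sum_list (map (\<lambda>(a, i, j).
      h' (a * q powi (2 * int i), i, Suc j) + h' (a * q powi (2 * int j), Suc i, j)) (ypow_terms q n))"
    for h' :: "complex \<times> nat \<times> nat \<Rightarrow> 'a"
    by (simp add: map_concat sum_list_concat map_map o_def split_def)
  show ?case
    unfolding sum_Suc by (subst Suc.IH) (simp add: split_def add.commute)
qed

lemma Delta_even:
  assumes "l \<noteq> 1"
  shows "Delta q (k, l, n) =
    map (\<lambda>(a, i, j). (a, (k - int j, 0, i), (k - int i, 0, j))) (ypow_terms q n)"
  using assms
  by (simp add: Delta_def Delta_y_pow_eq tens_mult_def mono_mult_def grade_def mono_one_def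
      map_map o_def Let_def split_def)

lemma Delta_odd:
  "Delta q (k, 1, n) =
     map (\<lambda>(a, i, j). (a * q powi int j, (k - int j, 1, i), (k - int i, 0, j))) (ypow_terms q n)
   @ map (\<lambda>(a, i, j). (a * q powi int i, (k - int j, 0, i), (k - int i, 1, j))) (ypow_terms q n)"
  by (simp add: Delta_def Delta_y_pow_eq tens_mult_def mono_mult_def grade_def mono_one_def
      Delta_theta_def map_map o_def Let_def split_def)

definition tens_eval :: "(mono \<Rightarrow> mono \<Rightarrow> complex) \<Rightarrow> tens \<Rightarrow> complex" where
  "tens_eval g t = sum_list (map (\<lambda>(c, a, b). c * g a b) t)"

definition tens_flip :: "tens \<Rightarrow> tens" where
  "tens_flip t = map (\<lambda>(c, a, b). ((-1) ^ (grade a * grade b) * c, b, a)) t"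

lemma tens_eval_cong:
  "(\<And>a b. g a b = h a b) \<Longrightarrow> tens_eval g t = tens_eval h t"
  by (simp add: tens_eval_def)

lemma tens_eval_scale: "tens_eval (\<lambda>a b. s * g a b) t = s * tens_eval g t"
  by (induction t) (auto simp: tens_eval_def algebra_simps)

lemma tens_eval_flip:
  "tens_eval g (tens_flip t) = tens_eval (\<lambda>a b. (-1) ^ (grade a * grade b) * g b a) t"
  by (simp add: tens_eval_def tens_flip_def o_def split_def mult.commute mult.left_commute)

lemma Delta_graded_cocommutative: "tens_eval g (tens_flip (Delta q f)) = tens_eval g (Delta q f)"
proof -
  obtain k l n where f: "f = (k, l, n)" by (cases f)
  show ?thesis
  proof (cases "l = 1")
    case True
    show ?thesis
      unfolding f True tens_eval_flip Delta_odd
      by (simp add: tens_eval_def split_def grade_def)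
         (subst (1 2) sum_list_ypow_terms_swap, simp add: split_def o_def add.commute)
  next
    case False
    show ?thesis
      unfolding f tens_eval_flip Delta_even[OF False]
      by (simp add: tens_eval_def split_def grade_def)
         (subst sum_list_ypow_terms_swap, simp add: split_def o_def)
  qed
qed

definition homogeneous :: "ufun \<Rightarrow> bool" where
  "homogeneous u \<longleftrightarrow> (\<forall>f. snd u f \<noteq> 0 \<longrightarrow> grade f = fst u)"

lemma snd_U_mult_eq_tens_eval:
  "snd (U_mult q u v) f = tens_eval (\<lambda>a b. (-1) ^ (fst v * grade a) * snd u a * snd v b) (Delta q f)"
  by (simp add: U_mult_def tens_eval_def split_def mult.assoc)

lemma U_mult_supercommute:
  assumes "homogeneous u"
  shows "snd (U_mult q u v) f = (-1) ^ (fst u * fst v) * snd (U_mult q v u) f"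
proof -
  have "snd (U_mult q v u) f
      = tens_eval (\<lambda>a b. (-1) ^ (fst u * grade a) * snd v a * snd u b) (tens_flip (Delta q f))"
    by (simp add: snd_U_mult_eq_tens_eval Delta_graded_cocommutative)
  also have "\<dots> = tens_eval (\<lambda>a b. snd u a * snd v b) (Delta q f)"
    unfolding tens_eval_flip
  proof (rule tens_eval_cong)
    fix a b
    show "(-1) ^ (grade a * grade b) * ((-1) ^ (fst u * grade b) * snd v b * snd u a)
        = snd u a * snd v b"
    proof (cases "snd u a = 0")
      case False
      with assms have "grade a = fst u" unfolding homogeneous_def by blast
      then show ?thesis by (simp add: mult.assoc mult.commute[of "snd v b"])
    qed simp
  qed
  also have "\<dots> = (-1) ^ (fst u * fst v) * snd (U_mult q u v) f"
    unfolding snd_U_mult_eq_tens_eval tens_eval_scale[symmetric]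
  proof (rule tens_eval_cong)
    fix a b
    show "snd u a * snd v b
        = (-1) ^ (fst u * fst v) * ((-1) ^ (fst v * grade a) * snd u a * snd v b)"
    proof (cases "snd u a = 0")
      case False
      with assms have "grade a = fst u" unfolding homogeneous_def by blast
      then show ?thesis by (simp add: mult.commute[of "fst v"])
    qed simp
  qed
  finally show ?thesis
    by (simp add: power_mult_distrib[symmetric] flip: power_add)
qed

lemma homogeneous_U_K: "homogeneous U_K"
  by (auto simp: homogeneous_def U_K_def grade_def)

lemma homogeneous_U_nabla: "homogeneous U_nabla"
  by (auto simp: homogeneous_def U_nabla_def grade_def)

theorem theorem4p1:
  fixes q :: complex
  assumes "q \<noteq> 0"
  shows "U_eq q (U_mult q U_K U_nabla) (U_mult q U_nabla U_K)
       \<and> U_eq q (U_mult q U_K U_N) (U_mult q U_N U_K)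
       \<and> U_eq q (U_mult q U_nabla U_N) (U_mult q U_N U_nabla)
       \<and> U_eq q (U_mult q U_nabla U_nabla) U_zero"
proof -
  have grades: "fst U_K = 0" "fst U_nabla = 1" "fst U_N = 0"
    by (simp_all add: U_K_def U_nabla_def U_N_def)
  have K_comm: "snd (U_mult q U_K v) f = snd (U_mult q v U_K) f" for v f
    using U_mult_supercommute[OF homogeneous_U_K] by (simp add: grades)
  have nabla_N_comm: "snd (U_mult q U_nabla U_N) f = snd (U_mult q U_N U_nabla) f" for f
    using U_mult_supercommute[OF homogeneous_U_nabla] by (simp add: grades)
  have nabla_square: "snd (U_mult q U_nabla U_nabla) f = 0" for f
    using U_mult_supercommute[OF homogeneous_U_nabla, of q U_nabla f] by (simp add: grades)
  show ?thesis
    by (simp add: U_eq_def U_zero_def K_comm nabla_N_comm nabla_square)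
qed

end
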